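(* In the setting of the context (with $d_i^\pm>0$ for all $i$), let $s=\min_{i\in[k]}n_i/n$. Then $$\lambda_{\max}(C^+)\le\tau^-+\frac{n\eta}{n(s(1-2\eta)+\eta)-(1-\eta)},\qquad\lambda_{\min}(C^-)\ge\tau^+,$$ and consequently $$\|(C^-)^{-1/2}C^+(C^-)^{-1/2}\|\le\frac{\lambda_{\max}(C^+)}{\lambda_{\min}(C^-)}\le\frac{\tau^-+\frac{n\eta}{n(s(1-2\eta)+\eta)-(1-\eta)}}{\tau^+}.$$
   Context: SSBM with $n$ nodes, $k\ge2$ clusters $C_1,\dots,C_k$ of sizes $n_1,\dots,n_k$, edge probability $p\in(0,1]$ and sign-flip probability $\eta\in[0,1/2)$ (edges present independently w.p. $p$, signed $+1$ within and $-1$ across clusters, signs flipped independently w.p. $\eta$). Parameters $\tau^+>0$, $\tau^-\ge0$. Expected positive/negative degrees of a node in $C_i$: $d_i^+=p(n_i(1-2\eta)+n\eta-(1-\eta))$, $d_i^-=p(n(1-\eta)-n_i(1-2\eta)-\eta)$. $u^\pm=(\sqrt{n_i/d_i^\pm})_{i\in[k]}$. $C^+=-p\eta u^+(u^+)^\top+\mathrm{diag}_i\big(1+\tau^-+\frac p{d_i^+}(1-\eta-n_i(1-2\eta))\big)$, $C^-=-p(1-\eta)u^-(u^-)^\top+\mathrm{diag}_i\big(1+\tau^++\frac p{d_i^-}(\eta+n_i(1-2\eta))\big)$. *)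

theory Defs
  imports "HOL-Analysis.Analysis"
begin

definition eigvals :: "real^'k^'k \<Rightarrow> real set" where
  "eigvals A = {l. \<exists>v. v \<noteq> 0 \<and> A *v v = l *\<^sub>R v}"

definition lambda_max :: "real^'k^'k \<Rightarrow> real" where
  "lambda_max A = Max (eigvals A)"

definition lambda_min :: "real^'k^'k \<Rightarrow> real" where
  "lambda_min A = Min (eigvals A)"

definition pd_sqrt :: "real^'k^'k \<Rightarrow> real^'k^'k" where
  "pd_sqrt A = (THE S. transpose S = S \<and> (\<forall>l\<in>eigvals S. l > 0) \<and> S ** S = A)"

definition inv_sqrt :: "real^'k^'k \<Rightarrow> real^'k^'k" where
  "inv_sqrt A = matrix_inv (pd_sqrt A)"

definition spec_norm :: "real^'k^'k \<Rightarrow> real" where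
  "spec_norm M = onorm (\<lambda>x. M *v x)"

definition dplus :: "nat \<Rightarrow> real \<Rightarrow> real \<Rightarrow> nat \<Rightarrow> real" where
  "dplus n p \<eta> ni = p * (real ni * (1 - 2*\<eta>) + real n * \<eta> - (1 - \<eta>))"

definition dminus :: "nat \<Rightarrow> real \<Rightarrow> real \<Rightarrow> nat \<Rightarrow> real" where
  "dminus n p \<eta> ni = p * (real n * (1 - \<eta>) - real ni * (1 - 2*\<eta>) - \<eta>)"

definition Cplus :: "('k::finite \<Rightarrow> nat) \<Rightarrow> real \<Rightarrow> real \<Rightarrow> real \<Rightarrow> real^'k^'k" where
  "Cplus ns p \<eta> \<tau>m = (let n = (\<Sum>i\<in>UNIV. ns i); d = (\<lambda>i. dplus n p \<eta> (ns i));
      u = (\<lambda>i. sqrt (real (ns i) / d i)) in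
     (\<chi> i j. - p * \<eta> * u i * u j +
        (if i = j then 1 + \<tau>m + p / d i * (1 - \<eta> - real (ns i) * (1 - 2*\<eta>)) else 0)))"

definition Cminus :: "('k::finite \<Rightarrow> nat) \<Rightarrow> real \<Rightarrow> real \<Rightarrow> real \<Rightarrow> real^'k^'k" where
  "Cminus ns p \<eta> \<tau>p = (let n = (\<Sum>i\<in>UNIV. ns i); d = (\<lambda>i. dminus n p \<eta> (ns i));
      u = (\<lambda>i. sqrt (real (ns i) / d i)) in
     (\<chi> i j. - p * (1 - \<eta>) * u i * u j +
        (if i = j then 1 + \<tau>p + p / d i * (\<eta> + real (ns i) * (1 - 2*\<eta>)) else 0)))"

end

theory Submission
  imports Defs
begin

text \<open>
  Both matrices are a diagonal matrix minus a positive multiple of a rank-one matrix: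
  C+ = diag(tau- + p n eta / d+_i) - p eta u+ u+^T and C- = diag(tau+ + p n (1 - eta) / d-_i) - p (1 - eta) u- u-^T.
  Writing c_i for the diagonal excess over tau and theta for eta resp. 1 - eta, one has
  sum_i u_i^2 / c_i = 1 / (p theta) exactly, so a weighted Cauchy-Schwarz inequality absorbs the rank-one
  term: x^T C- x >= tau+ |x|^2 and x^T C+ x >= tau- |x|^2. Dropping the rank-one term instead gives
  x^T C+ x <= (tau- + max_i p n eta / d+_i) |x|^2, and the maximum is attained at the smallest cluster.
  These Rayleigh-quotient bounds turn into eigenvalue bounds by the spectral theorem for real symmetric
  matrices (proved by maximising the Rayleigh quotient on invariant subspaces), which also gives the square
  root explicitly. Finally, with y = (C-)^(-1/2) x, the symmetric matrix M = (C-)^(-1/2) C+ (C-)^(-1/2) satisfies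
  0 <= x^T M x = y^T C+ y <= lambda_max(C+) |y|^2 <= lambda_max(C+) / lambda_min(C-) |x|^2,
  which bounds its operator norm.
\<close>

section \<open>Orthonormal bases and spectral matrices\<close>

lemma inner_matrix_vector_symmetric:
  fixes A :: "real^'n^'n"
  assumes "transpose A = A"
  shows "x \<bullet> (A *v y) = (A *v x) \<bullet> y"
  by (metis assms dot_lmul_matrix vector_transpose_matrix)

lemma symmetric_matrixI:
  fixes M :: "real^'n^'n"
  assumes "\<And>x y. (M *v x) \<bullet> y = x \<bullet> (M *v y)"
  shows "transpose M = M"
proof -
  have "transpose M *v x = M *v x" for x
  proof -
    have "(transpose M *v x - M *v x) \<bullet> y = 0" for y
      using assms[of x y] by (simp add: inner_diff_left dot_lmul_matrix)
    from this[of "transpose M *v x - M *v x"] show ?thesis by simp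
  qed
  then show ?thesis by (simp add: matrix_eq)
qed

definition orthonormal_basis :: "'a::euclidean_space set \<Rightarrow> bool" where
  "orthonormal_basis B \<longleftrightarrow>
     finite B \<and> pairwise orthogonal B \<and> (\<forall>b\<in>B. norm b = 1) \<and> span B = UNIV"

lemma orthonormal_basis_inner:
  assumes "orthonormal_basis B" "b \<in> B" "c \<in> B"
  shows "b \<bullet> c = (if b = c then 1 else 0)"
  using assms by (auto simp: orthonormal_basis_def norm_eq_1 orthogonal_def pairwise_def)

lemma orthonormal_basis_expansion:
  assumes "orthonormal_basis B"
  shows "(\<Sum>b\<in>B. (x \<bullet> b) *\<^sub>R b) = x"
  using assms orthonormal_basis_expand[of B x] by (auto simp: orthonormal_basis_def)

lemma orthonormal_basis_parseval:
  assumes "orthonormal_basis B"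
  shows "x \<bullet> y = (\<Sum>b\<in>B. (x \<bullet> b) * (y \<bullet> b))"
proof -
  have "x \<bullet> y = (\<Sum>b\<in>B. (x \<bullet> b) *\<^sub>R b) \<bullet> y"
    using orthonormal_basis_expansion[OF assms] by simp
  also have "\<dots> = (\<Sum>b\<in>B. (x \<bullet> b) * (y \<bullet> b))"
    by (simp add: inner_sum_left inner_commute[of y])
  finally show ?thesis .
qed

lemma orthonormal_basis_eqI:
  assumes "orthonormal_basis B" "\<And>c. c \<in> B \<Longrightarrow> x \<bullet> c = y \<bullet> c"
  shows "x = y"
  by (metis (no_types, lifting) assms orthonormal_basis_expansion sum.cong)

lemma orthonormal_basis_nonempty:
  assumes "orthonormal_basis (B :: 'a::euclidean_space set)"
  shows "B \<noteq> {}"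
proof
  assume "B = {}"
  then have "UNIV = {0::'a}" using assms by (simp add: orthonormal_basis_def)
  moreover obtain e :: 'a where "e \<in> Basis" using nonempty_Basis by blast
  ultimately show False using nonzero_Basis by blast
qed

definition spectral_matrix :: "(real^'n) set \<Rightarrow> (real^'n \<Rightarrow> real) \<Rightarrow> real^'n^'n" where
  "spectral_matrix B f = matrix (\<lambda>x. \<Sum>b\<in>B. (f b * (x \<bullet> b)) *\<^sub>R b)"

lemma spectral_matrix_apply:
  fixes B :: "(real^'n) set"
  shows "spectral_matrix B f *v x = (\<Sum>b\<in>B. (f b * (x \<bullet> b)) *\<^sub>R b)"
proof -
  have "linear (\<lambda>x::real^'n. \<Sum>b\<in>B. (f b * (x \<bullet> b)) *\<^sub>R b)"
    by (rule linearI) (simp_all add: inner_add_left algebra_simps sum.distrib scaleR_sum_right)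
  then show ?thesis by (simp add: spectral_matrix_def matrix_works)
qed

lemma inner_spectral_matrix:
  fixes B :: "(real^'n) set"
  assumes "orthonormal_basis B" "c \<in> B"
  shows "(spectral_matrix B f *v x) \<bullet> c = f c * (x \<bullet> c)"
proof -
  have "(spectral_matrix B f *v x) \<bullet> c = (\<Sum>b\<in>B. f b * (x \<bullet> b) * (b \<bullet> c))"
    by (simp add: spectral_matrix_apply inner_sum_left)
  also have "\<dots> = (\<Sum>b\<in>B. if b = c then f c * (x \<bullet> c) else 0)"
    by (rule sum.cong) (auto simp: orthonormal_basis_inner[OF assms(1) _ assms(2)])
  also have "\<dots> = f c * (x \<bullet> c)"
    using assms by (simp add: orthonormal_basis_def)
  finally show ?thesis .
qed

lemma orthonormal_basis_matrix_eqI: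
  fixes M N :: "real^'n^'n"
  assumes "orthonormal_basis B" "\<And>x c. c \<in> B \<Longrightarrow> (M *v x) \<bullet> c = (N *v x) \<bullet> c"
  shows "M = N"
  using orthonormal_basis_eqI[OF assms(1)] assms(2) by (simp add: matrix_eq)

lemma spectral_matrix_cong:
  fixes B :: "(real^'n) set"
  assumes "\<And>b. b \<in> B \<Longrightarrow> f b = g b"
  shows "spectral_matrix B f = spectral_matrix B g"
  unfolding spectral_matrix_def using assms by (metis (no_types, lifting) sum.cong)

lemma transpose_spectral_matrix:
  fixes B :: "(real^'n) set"
  assumes B: "orthonormal_basis B"
  shows "transpose (spectral_matrix B f) = spectral_matrix B f"
proof (rule symmetric_matrixI)
  fix x y :: "real^'n"
  have "(spectral_matrix B f *v x) \<bullet> y = (\<Sum>b\<in>B. f b * (x \<bullet> b) * (y \<bullet> b))"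
    by (subst orthonormal_basis_parseval[OF B]) (simp add: inner_spectral_matrix[OF B])
  also have "\<dots> = x \<bullet> (spectral_matrix B f *v y)"
    by (subst orthonormal_basis_parseval[OF B]) (simp add: inner_spectral_matrix[OF B] mult_ac)
  finally show "(spectral_matrix B f *v x) \<bullet> y = x \<bullet> (spectral_matrix B f *v y)" .
qed

lemma spectral_matrix_eigenvector:
  fixes B :: "(real^'n) set"
  assumes B: "orthonormal_basis B" and c: "c \<in> B"
  shows "spectral_matrix B f *v c = f c *\<^sub>R c"
  by (rule orthonormal_basis_eqI[OF B])
    (auto simp: inner_spectral_matrix[OF B] orthonormal_basis_inner[OF B c])

lemma spectral_matrix_mult:
  fixes B :: "(real^'n) set"
  assumes B: "orthonormal_basis B"
  shows "spectral_matrix B f ** spectral_matrix B g = spectral_matrix B (\<lambda>b. f b * g b)"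
  by (rule orthonormal_basis_matrix_eqI[OF B])
    (simp add: matrix_vector_mul_assoc[symmetric] inner_spectral_matrix[OF B])

lemma spectral_matrix_one:
  fixes B :: "(real^'n) set"
  assumes B: "orthonormal_basis B"
  shows "spectral_matrix B (\<lambda>b. 1) = mat 1"
  by (rule orthonormal_basis_matrix_eqI[OF B]) (simp add: inner_spectral_matrix[OF B])

lemma eigvals_spectral_matrix:
  fixes B :: "(real^'n) set"
  assumes B: "orthonormal_basis B"
  shows "eigvals (spectral_matrix B f) = f ` B"
proof
  show "eigvals (spectral_matrix B f) \<subseteq> f ` B"
  proof
    fix l assume "l \<in> eigvals (spectral_matrix B f)"
    then obtain w where w: "w \<noteq> 0" "spectral_matrix B f *v w = l *\<^sub>R w"
      by (auto simp: eigvals_def)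
    obtain c where c: "c \<in> B" "w \<bullet> c \<noteq> 0"
      using orthonormal_basis_eqI[OF B, of w 0] w(1) by (metis inner_zero_left)
    have "l * (w \<bullet> c) = f c * (w \<bullet> c)"
      using inner_spectral_matrix[OF B c(1), of f w] w(2) by (simp only: inner_scaleR_left)
    then show "l \<in> f ` B" using c by (metis image_eqI mult_right_cancel)
  qed
  show "f ` B \<subseteq> eigvals (spectral_matrix B f)"
  proof
    fix l assume "l \<in> f ` B"
    then obtain b where b: "b \<in> B" "l = f b" by blast
    have "b \<noteq> 0" using B b by (auto simp: orthonormal_basis_def)
    then show "l \<in> eigvals (spectral_matrix B f)"
      using spectral_matrix_eigenvector[OF B b(1)] b(2) by (auto simp: eigvals_def)
  qed
qed

lemma inner_self_orthonormal_basis: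
  assumes "orthonormal_basis B"
  shows "x \<bullet> x = (\<Sum>b\<in>B. (x \<bullet> b)\<^sup>2)"
  by (subst orthonormal_basis_parseval[OF assms]) (simp add: power2_eq_square)

lemma quadratic_form_spectral_matrix:
  fixes B :: "(real^'n) set"
  assumes B: "orthonormal_basis B"
  shows "x \<bullet> (spectral_matrix B f *v x) = (\<Sum>b\<in>B. f b * (x \<bullet> b)\<^sup>2)"
  by (subst orthonormal_basis_parseval[OF B])
    (simp add: inner_spectral_matrix[OF B] power2_eq_square mult_ac)

lemma norm_spectral_matrix_squared:
  fixes B :: "(real^'n) set"
  assumes B: "orthonormal_basis B"
  shows "(spectral_matrix B f *v x) \<bullet> (spectral_matrix B f *v x) = (\<Sum>b\<in>B. (f b)\<^sup>2 * (x \<bullet> b)\<^sup>2)"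
  by (subst inner_self_orthonormal_basis[OF B])
    (simp add: inner_spectral_matrix[OF B] power_mult_distrib)

section \<open>The spectral theorem for real symmetric matrices\<close>

lemma linear_coeff_eq_0_if_quadratic_nonpos:
  fixes c d :: real
  assumes "\<And>t. 2 * t * c + t\<^sup>2 * d \<le> 0"
  shows "c = 0"
proof (rule ccontr)
  assume "c \<noteq> 0"
  then have c2: "c\<^sup>2 > 0" by simp
  show False
  proof (cases "d \<ge> 0")
    case True
    have "2 * c * c + c\<^sup>2 * d = c\<^sup>2 * (2 + d)" by (simp add: algebra_simps power2_eq_square)
    then show False using assms[of c] c2 True by (smt (verit) mult_pos_pos)
  next
    case False
    have "2 * (-c/d) * c + (-c/d)\<^sup>2 * d = - (c\<^sup>2 / d)"
      using False by (simp add: field_simps power2_eq_square)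
    moreover have "c\<^sup>2 / d < 0" using c2 False by (simp add: divide_pos_neg)
    ultimately show False using assms[of "-c/d"] by simp
  qed
qed

lemma rayleigh_maximizer_exists:
  fixes A :: "real^'n^'n"
  assumes V: "subspace V" and ne: "V \<noteq> {0}"
  obtains v where "v \<in> V" "norm v = 1" "\<And>y. y \<in> V \<Longrightarrow> y \<bullet> (A *v y) \<le> (v \<bullet> (A *v v)) * (y \<bullet> y)"
proof -
  define K where "K = V \<inter> sphere 0 1"
  have "compact K" unfolding K_def
    by (intro closed_Int_compact closed_subspace V compact_sphere)
  obtain x where x: "x \<in> V" "x \<noteq> 0" using ne V subspace_0 by blast
  have normalized: "y /\<^sub>R norm y \<in> K" if "y \<in> V" "y \<noteq> 0" for y
    using that V by (auto simp: K_def subspace_scale)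
  then have "K \<noteq> {}" using x by blast
  have "continuous_on K (\<lambda>x. x \<bullet> (A *v x))"
    by (intro continuous_intros linear_continuous_on matrix_vector_mul_linear)
  from continuous_attains_sup[OF \<open>compact K\<close> \<open>K \<noteq> {}\<close> this]
  obtain v where v: "v \<in> K" and vmax: "\<And>y. y \<in> K \<Longrightarrow> y \<bullet> (A *v y) \<le> v \<bullet> (A *v v)"
    by blast
  have "y \<bullet> (A *v y) \<le> (v \<bullet> (A *v v)) * (y \<bullet> y)" if "y \<in> V" for y
  proof (cases "y = 0")
    case False
    from vmax[OF normalized[OF that False]]
    have "(y \<bullet> (A *v y)) / (norm y)\<^sup>2 \<le> v \<bullet> (A *v v)"
      by (simp add: matrix_vector_mult_scaleR power2_eq_square divide_inverse mult_ac)
    then show ?thesis using False by (simp add: divide_le_eq power2_norm_eq_inner)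
  qed simp
  then show ?thesis using that v by (auto simp: K_def)
qed

lemma symmetric_rayleigh_maximizer_eigenvector:
  fixes A :: "real^'n^'n"
  assumes sym: "transpose A = A" and V: "subspace V" and inv: "\<And>x. x \<in> V \<Longrightarrow> A *v x \<in> V"
    and v: "v \<in> V" "v \<bullet> v = 1"
    and max: "\<And>y. y \<in> V \<Longrightarrow> y \<bullet> (A *v y) \<le> \<mu> * (y \<bullet> y)"
    and \<mu>: "\<mu> = v \<bullet> (A *v v)"
  shows "A *v v = \<mu> *\<^sub>R v"
proof -
  have "w \<bullet> (A *v v - \<mu> *\<^sub>R v) = 0" if w: "w \<in> V" for w
  proof (rule linear_coeff_eq_0_if_quadratic_nonpos)
    fix t :: real
    have "v + t *\<^sub>R w \<in> V" using v w V by (simp add: subspace_add subspace_scale)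
    from max[OF this]
    have "2 * t * (w \<bullet> (A *v v) - \<mu> * (w \<bullet> v)) + t\<^sup>2 * (w \<bullet> (A *v w) - \<mu> * (w \<bullet> w)) \<le> 0"
      using inner_matrix_vector_symmetric[OF sym, of v w]
      by (simp add: matrix_vector_mult_scaleR matrix_vector_right_distrib inner_add_left
          inner_add_right \<mu>[symmetric] v(2) algebra_simps power2_eq_square
          inner_commute[of v w] inner_commute[of "A *v v" w])
    then show "2 * t * (w \<bullet> (A *v v - \<mu> *\<^sub>R v)) + t\<^sup>2 * (w \<bullet> (A *v w) - \<mu> * (w \<bullet> w)) \<le> 0"
      by (simp add: inner_diff_right)
  qed
  moreover have "A *v v - \<mu> *\<^sub>R v \<in> V" using inv v V by (simp add: subspace_diff subspace_scale)
  ultimately show ?thesis by (metis inner_eq_zero_iff eq_iff_diff_eq_0)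
qed

lemma orthonormal_extension_by_unit_vector:
  assumes V: "subspace V" and v: "v \<in> V" "v \<bullet> v = 1"
    and B: "B \<subseteq> V \<inter> {x. v \<bullet> x = 0}" "span B = V \<inter> {x. v \<bullet> x = 0}" "pairwise orthogonal B"
  shows "span (insert v B) = V" "pairwise orthogonal (insert v B)"
proof -
  have "V \<subseteq> span (insert v B)"
  proof
    fix x assume x: "x \<in> V"
    have "x - (v \<bullet> x) *\<^sub>R v \<in> V \<inter> {x. v \<bullet> x = 0}"
      using x v V by (auto simp: subspace_diff subspace_scale inner_diff_right)
    then show "x \<in> span (insert v B)" using B(2) span_breakdown_eq by blast
  qed
  moreover have "span (insert v B) \<subseteq> V" using B(1) v(1) V by (simp add: span_minimal)
  ultimately show "span (insert v B) = V" by blast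
  show "pairwise orthogonal (insert v B)"
    using B(1,3) by (auto simp: pairwise_insert orthogonal_def inner_commute)
qed

lemma symmetric_invariant_subspace_eigenbasis:
  fixes A :: "real^'n^'n"
  assumes sym: "transpose A = A"
  shows "subspace V \<Longrightarrow> (\<And>x. x \<in> V \<Longrightarrow> A *v x \<in> V) \<Longrightarrow>
    \<exists>B. B \<subseteq> V \<and> finite B \<and> pairwise orthogonal B \<and> (\<forall>b\<in>B. norm b = 1) \<and> span B = V \<and>
        (\<forall>b\<in>B. A *v b = (b \<bullet> (A *v b)) *\<^sub>R b)"
proof (induction "dim V" arbitrary: V rule: less_induct)
  case less
  show ?case
  proof (cases "V = {0}")
    case True
    then show ?thesis by (intro exI[of _ "{}"]) auto
  next
    case False
    obtain v where v: "v \<in> V" "norm v = 1"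
      and max: "\<And>y. y \<in> V \<Longrightarrow> y \<bullet> (A *v y) \<le> (v \<bullet> (A *v v)) * (y \<bullet> y)"
      using rayleigh_maximizer_exists[OF less.prems(1) False] by blast
    have vv: "v \<bullet> v = 1" using v(2) by (simp add: norm_eq_1)
    have ev: "A *v v = (v \<bullet> (A *v v)) *\<^sub>R v"
      by (rule symmetric_rayleigh_maximizer_eigenvector[OF sym less.prems v(1) vv max refl])
    define W where "W = V \<inter> {x. v \<bullet> x = 0}"
    have W: "subspace W" unfolding W_def by (intro subspace_inter less.prems(1) subspace_hyperplane)
    have "v \<notin> W" using vv by (simp add: W_def)
    then have "W \<subset> V" using v(1) unfolding W_def by blast
    then have "span W \<subset> span V"
      using W less.prems(1) by (simp add: span_eq_iff[THEN iffD2])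
    then have dimW: "dim W < dim V" by (rule dim_psubset)
    have invW: "A *v x \<in> W" if x: "x \<in> W" for x
    proof -
      have "v \<bullet> (A *v x) = (v \<bullet> (A *v v)) * (v \<bullet> x)"
        by (metis ev inner_matrix_vector_symmetric[OF sym] inner_scaleR_left)
      then show ?thesis using x less.prems(2) by (auto simp: W_def)
    qed
    obtain B where B: "B \<subseteq> W" "finite B" "pairwise orthogonal B" "\<forall>b\<in>B. norm b = 1" "span B = W"
        "\<forall>b\<in>B. A *v b = (b \<bullet> (A *v b)) *\<^sub>R b"
      using less.hyps[OF dimW W invW] by blast
    have "span (insert v B) = V" "pairwise orthogonal (insert v B)"
      using orthonormal_extension_by_unit_vector[OF less.prems(1) v(1) vv] B(1,3,5)
      by (simp_all add: W_def)
    then show ?thesis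
      using B v ev by (intro exI[of _ "insert v B"]) (auto simp: W_def)
  qed
qed

theorem symmetric_matrix_spectral_decomposition:
  fixes A :: "real^'n^'n"
  assumes sym: "transpose A = A"
  obtains B f where "orthonormal_basis B" "A = spectral_matrix B f"
proof -
  obtain B where B: "orthonormal_basis B" and ev: "\<And>b. b \<in> B \<Longrightarrow> A *v b = (b \<bullet> (A *v b)) *\<^sub>R b"
    using symmetric_invariant_subspace_eigenbasis[OF sym, of UNIV]
    unfolding orthonormal_basis_def by auto
  have "A = spectral_matrix B (\<lambda>b. b \<bullet> (A *v b))"
  proof (rule orthonormal_basis_matrix_eqI[OF B])
    fix x c assume c: "c \<in> B"
    have "(A *v x) \<bullet> c = x \<bullet> (A *v c)" by (simp add: inner_matrix_vector_symmetric[OF sym])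
    also have "\<dots> = (c \<bullet> (A *v c)) * (x \<bullet> c)" by (subst ev[OF c]) simp
    finally show "(A *v x) \<bullet> c = (spectral_matrix B (\<lambda>b. b \<bullet> (A *v b)) *v x) \<bullet> c"
      by (simp add: inner_spectral_matrix[OF B c])
  qed
  then show ?thesis using that B by blast
qed

section \<open>Rayleigh-quotient bounds\<close>

lemma
  fixes A :: "real^'n^'n"
  assumes "transpose A = A"
  shows finite_eigvals_symmetric: "finite (eigvals A)"
    and eigvals_symmetric_nonempty: "eigvals A \<noteq> {}"
proof -
  obtain B f where B: "orthonormal_basis B" "A = spectral_matrix B f"
    using symmetric_matrix_spectral_decomposition[OF assms] by blast
  then show "finite (eigvals A)" "eigvals A \<noteq> {}"
    using orthonormal_basis_nonempty[OF B(1)]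
    by (simp_all add: eigvals_spectral_matrix orthonormal_basis_def)
qed

lemma eigval_le_if_quadratic_form_le:
  fixes A :: "real^'n^'n"
  assumes "l \<in> eigvals A" "\<And>x. x \<bullet> (A *v x) \<le> c * (x \<bullet> x)"
  shows "l \<le> c"
proof -
  obtain v where "v \<noteq> 0" "A *v v = l *\<^sub>R v" using assms(1) by (auto simp: eigvals_def)
  then show ?thesis using assms(2)[of v] by (simp add: mult_le_cancel_right)
qed

lemma eigval_ge_if_quadratic_form_ge:
  fixes A :: "real^'n^'n"
  assumes "l \<in> eigvals A" "\<And>x. c * (x \<bullet> x) \<le> x \<bullet> (A *v x)"
  shows "c \<le> l"
proof -
  obtain v where "v \<noteq> 0" "A *v v = l *\<^sub>R v" using assms(1) by (auto simp: eigvals_def)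
  then show ?thesis using assms(2)[of v] by (simp add: mult_le_cancel_right)
qed

lemma lambda_max_le_if_quadratic_form_le:
  fixes A :: "real^'n^'n"
  assumes "transpose A = A" "\<And>x. x \<bullet> (A *v x) \<le> c * (x \<bullet> x)"
  shows "lambda_max A \<le> c"
  unfolding lambda_max_def
  using Max_in[OF finite_eigvals_symmetric eigvals_symmetric_nonempty] assms
  by (blast intro: eigval_le_if_quadratic_form_le)

lemma lambda_max_ge_if_quadratic_form_ge:
  fixes A :: "real^'n^'n"
  assumes "transpose A = A" "\<And>x. c * (x \<bullet> x) \<le> x \<bullet> (A *v x)"
  shows "c \<le> lambda_max A"
  unfolding lambda_max_def
  using Max_in[OF finite_eigvals_symmetric eigvals_symmetric_nonempty] assms
  by (blast intro: eigval_ge_if_quadratic_form_ge)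

lemma lambda_min_ge_if_quadratic_form_ge:
  fixes A :: "real^'n^'n"
  assumes "transpose A = A" "\<And>x. c * (x \<bullet> x) \<le> x \<bullet> (A *v x)"
  shows "c \<le> lambda_min A"
  unfolding lambda_min_def
  using Min_in[OF finite_eigvals_symmetric eigvals_symmetric_nonempty] assms
  by (blast intro: eigval_ge_if_quadratic_form_ge)

lemma lambda_min_le_eigval:
  fixes A :: "real^'n^'n"
  assumes "transpose A = A" "l \<in> eigvals A"
  shows "lambda_min A \<le> l"
  unfolding lambda_min_def using Min_le[OF finite_eigvals_symmetric] assms by blast

lemma quadratic_form_le_lambda_max:
  fixes A :: "real^'n^'n"
  assumes sym: "transpose A = A"
  shows "x \<bullet> (A *v x) \<le> lambda_max A * (x \<bullet> x)"
proof -
  obtain B f where B: "orthonormal_basis B" and A: "A = spectral_matrix B f"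
    using symmetric_matrix_spectral_decomposition[OF sym] by blast
  have "f b \<le> lambda_max A" if "b \<in> B" for b
    unfolding lambda_max_def using Max_ge[OF finite_eigvals_symmetric[OF sym]] that
    by (simp add: A eigvals_spectral_matrix[OF B])
  then have "(\<Sum>b\<in>B. f b * (x \<bullet> b)\<^sup>2) \<le> (\<Sum>b\<in>B. lambda_max A * (x \<bullet> b)\<^sup>2)"
    by (intro sum_mono mult_right_mono) simp_all
  then show ?thesis
    by (simp add: A quadratic_form_spectral_matrix[OF B] inner_self_orthonormal_basis[OF B, of x]
        sum_distrib_left)
qed

lemma norm_le_if_quadratic_form_abs_le:
  fixes A :: "real^'n^'n"
  assumes sym: "transpose A = A" and le: "\<And>x. \<bar>x \<bullet> (A *v x)\<bar> \<le> c * (x \<bullet> x)"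
  shows "norm (A *v x) \<le> c * norm x"
proof -
  obtain B f where B: "orthonormal_basis B" and A: "A = spectral_matrix B f"
    using symmetric_matrix_spectral_decomposition[OF sym] by blast
  have "\<bar>f b\<bar> \<le> c" if "b \<in> B" for b
    using le[of b] that spectral_matrix_eigenvector[OF B that, of f]
      orthonormal_basis_inner[OF B that that] by (simp add: A)
  then have "(f b)\<^sup>2 \<le> c\<^sup>2" if "b \<in> B" for b
    using that by (metis abs_ge_zero power2_abs power_mono)
  then have "(\<Sum>b\<in>B. (f b)\<^sup>2 * (x \<bullet> b)\<^sup>2) \<le> (\<Sum>b\<in>B. c\<^sup>2 * (x \<bullet> b)\<^sup>2)"
    by (intro sum_mono mult_right_mono) simp_all
  then have "(norm (A *v x))\<^sup>2 \<le> (c * norm x)\<^sup>2"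
    by (simp add: power2_norm_eq_inner power_mult_distrib A norm_spectral_matrix_squared[OF B]
        inner_self_orthonormal_basis[OF B, of x] sum_distrib_left)
  moreover have "c \<ge> 0"
    using le[of "axis undefined 1"] by (simp add: zero_le_mult_iff axis_eq_0_iff)
  ultimately show ?thesis by (simp add: power2_le_iff_abs_le)
qed

section \<open>Square roots of positive definite matrices\<close>

lemma matrix_inv_eqI:
  fixes A B :: "'a::semiring_1^'n^'n"
  assumes AB: "A ** B = mat 1" and BA: "B ** A = mat 1"
  shows "matrix_inv A = B"
  unfolding matrix_inv_def
proof (rule someI2[where a = B])
  show "A ** B = mat 1 \<and> B ** A = mat 1" using AB BA by blast
  fix X assume "A ** X = mat 1 \<and> X ** A = mat 1"
  then have XA: "X ** A = mat 1" by blast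
  have "X = X ** (A ** B)" using AB by (simp add: matrix_mul_rid)
  also have "\<dots> = (X ** A) ** B" by (simp add: matrix_mul_assoc)
  finally show "X = B" using XA by (simp add: matrix_mul_lid)
qed

lemma positive_sqrt_matrix_eigenvector:
  fixes T :: "real^'n^'n"
  assumes pos: "\<forall>l\<in>eigvals T. l > 0" and sq: "(T ** T) *v c = \<sigma>\<^sup>2 *\<^sub>R c" and "\<sigma> > 0"
  shows "T *v c = \<sigma> *\<^sub>R c"
proof (rule ccontr)
  define w where "w = T *v c - \<sigma> *\<^sub>R c"
  assume "T *v c \<noteq> \<sigma> *\<^sub>R c"
  then have "w \<noteq> 0" by (simp add: w_def)
  moreover have "T *v w = (- \<sigma>) *\<^sub>R w"
    using sq by (simp add: w_def matrix_vector_mult_diff_distrib matrix_vector_mult_scaleR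
        matrix_vector_mul_assoc[symmetric] algebra_simps power2_eq_square)
  ultimately have "- \<sigma> \<in> eigvals T" by (auto simp: eigvals_def)
  then show False using pos \<open>\<sigma> > 0\<close> by force
qed

lemma pd_sqrt_spectral_matrix:
  fixes B :: "(real^'n) set"
  assumes B: "orthonormal_basis B" and pos: "\<And>b. b \<in> B \<Longrightarrow> f b > 0"
  shows "pd_sqrt (spectral_matrix B f) = spectral_matrix B (\<lambda>b. sqrt (f b))"
  unfolding pd_sqrt_def
proof (rule the_equality)
  let ?S = "spectral_matrix B (\<lambda>b. sqrt (f b))"
  have "?S ** ?S = spectral_matrix B f"
    unfolding spectral_matrix_mult[OF B] using pos
    by (intro spectral_matrix_cong) (simp add: less_imp_le)
  moreover have "\<forall>l\<in>eigvals ?S. 0 < l"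
    using pos by (simp add: eigvals_spectral_matrix[OF B])
  ultimately show "transpose ?S = ?S \<and> (\<forall>l\<in>eigvals ?S. 0 < l) \<and> ?S ** ?S = spectral_matrix B f"
    by (simp add: transpose_spectral_matrix[OF B])
  fix T
  assume T: "transpose T = T \<and> (\<forall>l\<in>eigvals T. 0 < l) \<and> T ** T = spectral_matrix B f"
  show "T = ?S"
  proof (rule orthonormal_basis_matrix_eqI[OF B])
    fix x c assume c: "c \<in> B"
    have sq: "(T ** T) *v c = (sqrt (f c))\<^sup>2 *\<^sub>R c"
      using T spectral_matrix_eigenvector[OF B c, of f] pos[OF c] by simp
    have "T *v c = sqrt (f c) *\<^sub>R c"
      by (rule positive_sqrt_matrix_eigenvector[OF _ sq]) (use T pos[OF c] in simp_all)
    then have "(T *v x) \<bullet> c = sqrt (f c) * (x \<bullet> c)"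
      using T inner_matrix_vector_symmetric[of T x c] by simp
    then show "(T *v x) \<bullet> c = (?S *v x) \<bullet> c" by (simp add: inner_spectral_matrix[OF B c])
  qed
qed

lemma inv_sqrt_spectral_matrix:
  fixes B :: "(real^'n) set"
  assumes B: "orthonormal_basis B" and pos: "\<And>b. b \<in> B \<Longrightarrow> f b > 0"
  shows "inv_sqrt (spectral_matrix B f) = spectral_matrix B (\<lambda>b. inverse (sqrt (f b)))"
proof -
  let ?S = "spectral_matrix B (\<lambda>b. sqrt (f b))"
  let ?R = "spectral_matrix B (\<lambda>b. inverse (sqrt (f b)))"
  have "?S ** ?R = spectral_matrix B (\<lambda>b. 1)" "?R ** ?S = spectral_matrix B (\<lambda>b. 1)"
    unfolding spectral_matrix_mult[OF B] using pos
    by (intro spectral_matrix_cong; simp add: less_imp_neq[symmetric])+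
  then have "matrix_inv ?S = ?R"
    by (intro matrix_inv_eqI) (simp_all add: spectral_matrix_one[OF B])
  then show ?thesis by (simp add: inv_sqrt_def pd_sqrt_spectral_matrix[OF B pos])
qed

lemma
  fixes P :: "real^'n^'n"
  assumes sym: "transpose P = P" and pos: "\<forall>l\<in>eigvals P. l > 0"
  shows transpose_inv_sqrt: "transpose (inv_sqrt P) = inv_sqrt P"
    and inner_self_inv_sqrt_le: "(inv_sqrt P *v x) \<bullet> (inv_sqrt P *v x) \<le> (x \<bullet> x) / lambda_min P"
proof -
  obtain B f where B: "orthonormal_basis B" and P: "P = spectral_matrix B f"
    using symmetric_matrix_spectral_decomposition[OF sym] by blast
  have eig: "f b \<in> eigvals P" if "b \<in> B" for b
    using that by (simp add: P eigvals_spectral_matrix[OF B])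
  then have fpos: "f b > 0" if "b \<in> B" for b using pos that by blast
  have R: "inv_sqrt P = spectral_matrix B (\<lambda>b. inverse (sqrt (f b)))"
    unfolding P by (rule inv_sqrt_spectral_matrix[OF B fpos])
  show "transpose (inv_sqrt P) = inv_sqrt P" unfolding R by (rule transpose_spectral_matrix[OF B])
  have min_pos: "lambda_min P > 0"
    using pos Min_in[OF finite_eigvals_symmetric[OF sym] eigvals_symmetric_nonempty[OF sym]]
    by (simp add: lambda_min_def)
  have "(inv_sqrt P *v x) \<bullet> (inv_sqrt P *v x) = (\<Sum>b\<in>B. (inverse (sqrt (f b)))\<^sup>2 * (x \<bullet> b)\<^sup>2)"
    unfolding R by (rule norm_spectral_matrix_squared[OF B])
  also have "\<dots> = (\<Sum>b\<in>B. (x \<bullet> b)\<^sup>2 / f b)"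
    using fpos by (intro sum.cong) (simp_all add: power_inverse divide_inverse less_imp_le)
  also have "\<dots> \<le> (\<Sum>b\<in>B. (x \<bullet> b)\<^sup>2 / lambda_min P)"
    using lambda_min_le_eigval[OF sym eig] min_pos fpos
    by (intro sum_mono divide_left_mono) simp_all
  also have "\<dots> = (x \<bullet> x) / lambda_min P"
    by (simp add: inner_self_orthonormal_basis[OF B, of x] sum_divide_distrib)
  finally show "(inv_sqrt P *v x) \<bullet> (inv_sqrt P *v x) \<le> (x \<bullet> x) / lambda_min P" .
qed

lemma spec_norm_inv_sqrt_congruence_le:
  fixes P C :: "real^'n^'n"
  assumes P: "transpose P = P" "\<forall>l\<in>eigvals P. l > 0"
    and C: "transpose C = C" "\<And>x. 0 \<le> x \<bullet> (C *v x)"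
  shows "spec_norm (inv_sqrt P ** C ** inv_sqrt P) \<le> lambda_max C / lambda_min P"
proof -
  define R where "R = inv_sqrt P"
  define M where "M = R ** C ** R"
  have R: "transpose R = R" unfolding R_def by (rule transpose_inv_sqrt[OF P])
  have M: "transpose M = M"
    by (simp add: M_def matrix_transpose_mul R C(1) matrix_mul_assoc)
  have L: "0 \<le> lambda_max C"
    using lambda_max_ge_if_quadratic_form_ge[OF C(1), of 0] C(2) by simp
  have "\<bar>x \<bullet> (M *v x)\<bar> \<le> lambda_max C / lambda_min P * (x \<bullet> x)" for x
  proof -
    have "x \<bullet> (M *v x) = (R *v x) \<bullet> (C *v (R *v x))"
      by (simp add: M_def matrix_vector_mul_assoc[symmetric] inner_matrix_vector_symmetric[OF R])
    also have "\<dots> \<le> lambda_max C * ((R *v x) \<bullet> (R *v x))"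
      by (rule quadratic_form_le_lambda_max[OF C(1)])
    also have "\<dots> \<le> lambda_max C * ((x \<bullet> x) / lambda_min P)"
      unfolding R_def by (intro mult_left_mono inner_self_inv_sqrt_le[OF P] L)
    finally have "x \<bullet> (M *v x) \<le> lambda_max C / lambda_min P * (x \<bullet> x)" by simp
    moreover have "0 \<le> x \<bullet> (M *v x)"
      using C(2)[of "R *v x"] by (simp add: M_def matrix_vector_mul_assoc[symmetric]
          inner_matrix_vector_symmetric[OF R])
    ultimately show ?thesis by simp
  qed
  then show ?thesis
    unfolding spec_norm_def M_def[symmetric] R_def[symmetric]
    by (intro onorm_le norm_le_if_quadratic_form_abs_le[OF M])
qed

section \<open>Diagonal plus rank-one matrices\<close>

definition diag_plus_rank_one :: "('k::finite \<Rightarrow> real) \<Rightarrow> real \<Rightarrow> ('k \<Rightarrow> real) \<Rightarrow> real^'k^'k" where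
  "diag_plus_rank_one a \<kappa> u = (\<chi> i j. \<kappa> * u i * u j + (if i = j then a i else 0))"

lemma quadratic_form_diag_plus_rank_one:
  "x \<bullet> (diag_plus_rank_one a \<kappa> u *v x) = (\<Sum>i\<in>UNIV. a i * (x$i)\<^sup>2) + \<kappa> * (\<Sum>i\<in>UNIV. u i * x$i)\<^sup>2"
proof -
  have "x \<bullet> (diag_plus_rank_one a \<kappa> u *v x)
      = (\<Sum>i\<in>UNIV. \<Sum>j\<in>UNIV. x$i * ((\<kappa> * u i * u j + (if i = j then a i else 0)) * x$j))"
    by (simp add: diag_plus_rank_one_def inner_vec_def matrix_vector_mult_def sum_distrib_left)
  also have "\<dots> = (\<Sum>i\<in>UNIV. \<Sum>j\<in>UNIV. \<kappa> * ((u i * x$i) * (u j * x$j))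
      + (if i = j then a i * (x$i)\<^sup>2 else 0))"
    by (intro sum.cong refl) (simp add: algebra_simps power2_eq_square)
  also have "\<dots> = (\<Sum>i\<in>UNIV. \<Sum>j\<in>UNIV. \<kappa> * ((u i * x$i) * (u j * x$j)))
      + (\<Sum>i\<in>UNIV. \<Sum>j\<in>UNIV. if i = j then a i * (x$i)\<^sup>2 else 0)"
    by (simp only: sum.distrib)
  also have "\<dots> = (\<Sum>i\<in>UNIV. a i * (x$i)\<^sup>2) + \<kappa> * (\<Sum>i\<in>UNIV. u i * x$i)\<^sup>2"
    by (simp add: sum_product power2_eq_square sum_distrib_left[symmetric])
  finally show ?thesis .
qed

lemma weighted_Cauchy_Schwarz:
  fixes u x c :: "'k::finite \<Rightarrow> real"
  assumes c: "\<And>i. c i > 0"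
  shows "(\<Sum>i\<in>UNIV. u i * x i)\<^sup>2 \<le> (\<Sum>i\<in>UNIV. (u i)\<^sup>2 / c i) * (\<Sum>i\<in>UNIV. c i * (x i)\<^sup>2)"
proof -
  define X :: "real^'k" where "X = (\<chi> i. u i / sqrt (c i))"
  define Y :: "real^'k" where "Y = (\<chi> i. sqrt (c i) * x i)"
  have "X \<bullet> Y = (\<Sum>i\<in>UNIV. u i * x i)"
    using c by (simp add: X_def Y_def inner_vec_def less_imp_neq[OF c, symmetric])
  moreover have "X \<bullet> X = (\<Sum>i\<in>UNIV. (u i)\<^sup>2 / c i)"
    using c by (simp add: X_def inner_vec_def power2_eq_square less_imp_le)
  moreover have "Y \<bullet> Y = (\<Sum>i\<in>UNIV. c i * (x i)\<^sup>2)"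
    using c by (simp add: Y_def inner_vec_def power2_eq_square less_imp_le mult_ac)
  ultimately show ?thesis using Cauchy_Schwarz_ineq[of X Y] by simp
qed

lemma inner_self_vec: "(x::real^'k) \<bullet> x = (\<Sum>i\<in>UNIV. (x$i)\<^sup>2)"
  by (simp add: inner_vec_def power2_eq_square)

lemma quadratic_form_diag_minus_rank_one_ge:
  fixes c u :: "'k::finite \<Rightarrow> real"
  assumes c: "\<And>i. c i > 0" and \<kappa>: "\<kappa> \<ge> 0" and small: "\<kappa> * (\<Sum>i\<in>UNIV. (u i)\<^sup>2 / c i) \<le> 1"
  shows "\<tau> * (x \<bullet> x) \<le> x \<bullet> (diag_plus_rank_one (\<lambda>i. \<tau> + c i) (- \<kappa>) u *v x)"
proof -
  have "\<kappa> * (\<Sum>i\<in>UNIV. u i * x$i)\<^sup>2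
      \<le> (\<kappa> * (\<Sum>i\<in>UNIV. (u i)\<^sup>2 / c i)) * (\<Sum>i\<in>UNIV. c i * (x$i)\<^sup>2)"
    using mult_left_mono[OF weighted_Cauchy_Schwarz[of c u "\<lambda>i. x$i", OF c] \<kappa>]
    by (simp add: mult_ac)
  also have "\<dots> \<le> (\<Sum>i\<in>UNIV. c i * (x$i)\<^sup>2)"
    using small c \<kappa> by (intro mult_left_le_one_le sum_nonneg mult_nonneg_nonneg)
      (simp_all add: less_imp_le)
  finally show ?thesis
    by (simp add: quadratic_form_diag_plus_rank_one inner_self_vec distrib_right sum.distrib
        sum_distrib_left)
qed

lemma quadratic_form_diag_minus_rank_one_le:
  fixes a u :: "'k::finite \<Rightarrow> real"
  assumes \<kappa>: "\<kappa> \<ge> 0" and a: "\<And>i. a i \<le> \<beta>"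
  shows "x \<bullet> (diag_plus_rank_one a (- \<kappa>) u *v x) \<le> \<beta> * (x \<bullet> x)"
proof -
  have "(\<Sum>i\<in>UNIV. a i * (x$i)\<^sup>2) \<le> (\<Sum>i\<in>UNIV. \<beta> * (x$i)\<^sup>2)"
    using a by (intro sum_mono mult_right_mono) simp_all
  moreover have "0 \<le> \<kappa> * (\<Sum>i\<in>UNIV. u i * x$i)\<^sup>2" using \<kappa> by simp
  ultimately show ?thesis
    by (simp add: quadratic_form_diag_plus_rank_one inner_self_vec sum_distrib_left)
qed

lemma quadratic_form_cluster_rank_one_ge:
  fixes ns :: "'k::finite \<Rightarrow> nat" and d :: "'k \<Rightarrow> real"
  assumes n: "n = (\<Sum>j\<in>UNIV. ns j)" "0 < n" and p: "0 < p" and \<theta>: "0 \<le> \<theta>" and d: "\<And>i. d i > 0"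
  shows "\<tau> * (x \<bullet> x) \<le> x \<bullet> (diag_plus_rank_one (\<lambda>i. \<tau> + p * real n * \<theta> / d i) (- (p * \<theta>))
           (\<lambda>i. sqrt (real (ns i) / d i)) *v x)"
proof (cases "\<theta> = 0")
  case True
  then show ?thesis
    by (simp add: quadratic_form_diag_plus_rank_one inner_self_vec sum_distrib_left)
next
  case False
  then have \<theta>: "\<theta> > 0" using \<theta> by simp
  have "(\<Sum>i\<in>UNIV. (sqrt (real (ns i) / d i))\<^sup>2 / (p * real n * \<theta> / d i))
      = (\<Sum>i\<in>UNIV. real (ns i) / (p * real n * \<theta>))"
    using d by (intro sum.cong) (simp_all add: less_imp_le less_imp_neq[symmetric])
  also have "\<dots> = real n / (p * real n * \<theta>)"
    by (simp add: sum_divide_distrib[symmetric] n(1))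
  also have "\<dots> = 1 / (p * \<theta>)"
    using n(2) by simp
  finally have "p * \<theta> * (\<Sum>i\<in>UNIV. (sqrt (real (ns i) / d i))\<^sup>2 / (p * real n * \<theta> / d i)) = 1"
    using p \<theta> by simp
  moreover have "real n > 0" using n(2) by simp
  ultimately show ?thesis
    using p \<theta> d by (intro quadratic_form_diag_minus_rank_one_ge) simp_all
qed

section \<open>The matrices C+ and C-\<close>

lemma transpose_Cplus: "transpose (Cplus ns p \<eta> \<tau>) = Cplus ns p \<eta> \<tau>"
  by (simp add: Cplus_def Let_def transpose_def vec_eq_iff mult_ac)

lemma transpose_Cminus: "transpose (Cminus ns p \<eta> \<tau>) = Cminus ns p \<eta> \<tau>"
  by (simp add: Cminus_def Let_def transpose_def vec_eq_iff mult_ac)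

lemma Cplus_eq_diag_plus_rank_one:
  assumes n: "n = (\<Sum>j\<in>UNIV. ns j)" and d: "\<And>i. dplus n p \<eta> (ns i) \<noteq> 0"
  shows "Cplus ns p \<eta> \<tau> = diag_plus_rank_one (\<lambda>i. \<tau> + p * real n * \<eta> / dplus n p \<eta> (ns i))
           (- (p * \<eta>)) (\<lambda>i. sqrt (real (ns i) / dplus n p \<eta> (ns i)))"
proof -
  have "1 + \<tau> + p / dplus n p \<eta> (ns i) * (1 - \<eta> - real (ns i) * (1 - 2*\<eta>))
      = \<tau> + p * real n * \<eta> / dplus n p \<eta> (ns i)" for i
    using d[of i] by (simp add: field_simps) (simp add: dplus_def algebra_simps)
  then show ?thesis
    by (simp add: Cplus_def diag_plus_rank_one_def n[symmetric] vec_eq_iff)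
qed

lemma Cminus_eq_diag_plus_rank_one:
  assumes n: "n = (\<Sum>j\<in>UNIV. ns j)" and d: "\<And>i. dminus n p \<eta> (ns i) \<noteq> 0"
  shows "Cminus ns p \<eta> \<tau> = diag_plus_rank_one (\<lambda>i. \<tau> + p * real n * (1 - \<eta>) / dminus n p \<eta> (ns i))
           (- (p * (1 - \<eta>))) (\<lambda>i. sqrt (real (ns i) / dminus n p \<eta> (ns i)))"
proof -
  have "1 + \<tau> + p / dminus n p \<eta> (ns i) * (\<eta> + real (ns i) * (1 - 2*\<eta>))
      = \<tau> + p * real n * (1 - \<eta>) / dminus n p \<eta> (ns i)" for i
    using d[of i] by (simp add: field_simps) (simp add: dminus_def algebra_simps)
  then show ?thesis
    by (simp add: Cminus_def diag_plus_rank_one_def n[symmetric] vec_eq_iff)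
qed

lemma Cplus_quadratic_form_ge:
  fixes ns :: "'k::finite \<Rightarrow> nat"
  assumes n: "n = (\<Sum>j\<in>UNIV. ns j)" "0 < n" and p: "0 < p" and \<eta>: "0 \<le> \<eta>"
    and d: "\<And>i. dplus n p \<eta> (ns i) > 0"
  shows "\<tau> * (x \<bullet> x) \<le> x \<bullet> (Cplus ns p \<eta> \<tau> *v x)"
  unfolding Cplus_eq_diag_plus_rank_one[OF n(1) less_imp_neq[OF d, symmetric]]
  by (rule quadratic_form_cluster_rank_one_ge[OF n p \<eta> d])

lemma Cminus_quadratic_form_ge:
  fixes ns :: "'k::finite \<Rightarrow> nat"
  assumes n: "n = (\<Sum>j\<in>UNIV. ns j)" "0 < n" and p: "0 < p" and \<eta>: "\<eta> \<le> 1"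
    and d: "\<And>i. dminus n p \<eta> (ns i) > 0"
  shows "\<tau> * (x \<bullet> x) \<le> x \<bullet> (Cminus ns p \<eta> \<tau> *v x)"
  unfolding Cminus_eq_diag_plus_rank_one[OF n(1) less_imp_neq[OF d, symmetric]]
  by (rule quadratic_form_cluster_rank_one_ge[OF n p _ d]) (use \<eta> in simp)

lemma Cplus_quadratic_form_le:
  fixes ns :: "'k::finite \<Rightarrow> nat"
  assumes n: "n = (\<Sum>j\<in>UNIV. ns j)" "0 < n" and s: "s = Min ((\<lambda>i. real (ns i) / real n) ` UNIV)"
    and p: "0 < p" and \<eta>: "0 \<le> \<eta>" "\<eta> \<le> 1/2" and d: "\<And>i. dplus n p \<eta> (ns i) > 0"
  shows "x \<bullet> (Cplus ns p \<eta> \<tau> *v x)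
           \<le> (\<tau> + real n * \<eta> / (real n * (s * (1 - 2*\<eta>) + \<eta>) - (1 - \<eta>))) * (x \<bullet> x)"
proof -
  define D where "D = real n * (s * (1 - 2*\<eta>) + \<eta>) - (1 - \<eta>)"
  have dplus_ge: "p * D \<le> dplus n p \<eta> (ns i)" for i
  proof -
    have "s \<le> real (ns i) / real n" unfolding s by (rule Min_le) auto
    then have "real n * s * (1 - 2*\<eta>) \<le> real (ns i) * (1 - 2*\<eta>)"
      using n(2) \<eta> by (intro mult_right_mono) (simp_all add: field_simps)
    then have "p * (real n * s * (1 - 2*\<eta>)) \<le> p * (real (ns i) * (1 - 2*\<eta>))"
      using p by (intro mult_left_mono) simp_all
    then show ?thesis by (simp add: D_def dplus_def algebra_simps)
  qed
  have "s \<in> (\<lambda>i. real (ns i) / real n) ` UNIV" unfolding s by (rule Min_in) simp_all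
  then obtain i0 where "s = real (ns i0) / real n" by blast
  then have "dplus n p \<eta> (ns i0) = p * D" using n(2) by (simp add: D_def dplus_def algebra_simps)
  then have D: "D > 0" using d[of i0] p by (simp add: zero_less_mult_iff)
  have "p * real n * \<eta> / dplus n p \<eta> (ns i) \<le> real n * \<eta> / D" for i
  proof -
    have "p * real n * \<eta> / dplus n p \<eta> (ns i) \<le> p * real n * \<eta> / (p * D)"
      using dplus_ge[of i] d[of i] D p \<eta> by (intro divide_left_mono) simp_all
    then show ?thesis using p by simp
  qed
  then show ?thesis
    unfolding Cplus_eq_diag_plus_rank_one[OF n(1) less_imp_neq[OF d, symmetric]] D_def[symmetric]
    using p \<eta> by (intro quadratic_form_diag_minus_rank_one_le) simp_all
qed

theorem mainTheorem10:
  fixes ns :: "'k::finite \<Rightarrow> nat" and p \<eta> \<tau>p \<tau>m :: real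
  assumes "CARD('k) \<ge> 2"
    and "\<forall>i. ns i > 0"
    and "0 < p" "p \<le> 1" "0 \<le> \<eta>" "\<eta> < 1/2"
    and "\<tau>p > 0" "\<tau>m \<ge> 0"
    and "\<forall>i. dplus (\<Sum>j\<in>UNIV. ns j) p \<eta> (ns i) > 0"
    and "\<forall>i. dminus (\<Sum>j\<in>UNIV. ns j) p \<eta> (ns i) > 0"
  shows "let n = real (\<Sum>j\<in>UNIV. ns j);
             s = Min ((\<lambda>i. real (ns i) / n) ` UNIV);
             B = \<tau>m + n * \<eta> / (n * (s * (1 - 2*\<eta>) + \<eta>) - (1 - \<eta>));
             Cp = Cplus ns p \<eta> \<tau>m; Cm = Cminus ns p \<eta> \<tau>p
         in lambda_max Cp \<le> B \<and> lambda_min Cm \<ge> \<tau>p \<and>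
            spec_norm (inv_sqrt Cm ** Cp ** inv_sqrt Cm) \<le> lambda_max Cp / lambda_min Cm \<and>
            lambda_max Cp / lambda_min Cm \<le> B / \<tau>p"
proof -
  define n where "n = (\<Sum>j\<in>UNIV. ns j)"
  define s where "s = Min ((\<lambda>i. real (ns i) / real n) ` UNIV)"
  define B where "B = \<tau>m + real n * \<eta> / (real n * (s * (1 - 2*\<eta>) + \<eta>) - (1 - \<eta>))"
  define Cp where "Cp = Cplus ns p \<eta> \<tau>m"
  define Cm where "Cm = Cminus ns p \<eta> \<tau>p"
  have n: "0 < n" unfolding n_def using assms(2) by (simp add: sum_pos)
  have dp: "\<And>i. dplus n p \<eta> (ns i) > 0" and dm: "\<And>i. dminus n p \<eta> (ns i) > 0"
    using assms(9,10) by (simp_all add: n_def)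
  have sym: "transpose Cp = Cp" "transpose Cm = Cm"
    by (simp_all add: Cp_def Cm_def transpose_Cplus transpose_Cminus)
  have Cp_ge: "\<tau>m * (x \<bullet> x) \<le> x \<bullet> (Cp *v x)" for x
    unfolding Cp_def by (rule Cplus_quadratic_form_ge[OF n_def n assms(3,5) dp])
  have Cp_le: "x \<bullet> (Cp *v x) \<le> B * (x \<bullet> x)" for x
    unfolding Cp_def B_def
    by (rule Cplus_quadratic_form_le[OF n_def n s_def assms(3,5) _ dp]) (use assms(6) in simp)
  have Cm_ge: "\<tau>p * (x \<bullet> x) \<le> x \<bullet> (Cm *v x)" for x
    unfolding Cm_def
    by (rule Cminus_quadratic_form_ge[OF n_def n assms(3) _ dm]) (use assms(6) in simp)
  have L: "\<tau>m \<le> lambda_max Cp" "lambda_max Cp \<le> B"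
    using lambda_max_ge_if_quadratic_form_ge lambda_max_le_if_quadratic_form_le sym Cp_ge Cp_le
    by blast+
  have m: "\<tau>p \<le> lambda_min Cm" by (rule lambda_min_ge_if_quadratic_form_ge[OF sym(2) Cm_ge])
  have "\<forall>l\<in>eigvals Cm. l > 0"
    using eigval_ge_if_quadratic_form_ge[OF _ Cm_ge] assms(7) by fastforce
  moreover have "0 \<le> x \<bullet> (Cp *v x)" for x
    using Cp_ge[of x] assms(8) by (meson order_trans zero_le_mult_iff inner_ge_zero)
  ultimately have "spec_norm (inv_sqrt Cm ** Cp ** inv_sqrt Cm) \<le> lambda_max Cp / lambda_min Cm"
    by (rule spec_norm_inv_sqrt_congruence_le[OF sym(2) _ sym(1)])
  moreover have "lambda_max Cp / lambda_min Cm \<le> B / \<tau>p"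
    using L m assms(7,8) by (intro frac_le) auto
  ultimately show ?thesis using L m by (simp add: Let_def flip: n_def s_def B_def Cp_def Cm_def)
qed

end
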